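(* Let $n\ge2$, $\delta>0$, $R>0$, and let $\mathbf{a}\in\mathbb{R}^n$ be a fixed nonzero vector with $-2\le\mathbf{a}_i\le2$ for all $i$ and $\mathbf{a}^\top\mathbf{1}=0$. Let $\mathbf{y}$ be uniformly distributed on the sphere $\{\mathbf{y}\in\mathbb{R}^n:\|\mathbf{y}\|_2=R\}$, and let $\tilde{\mathbf{y}}$ be obtained by rounding each entry of $\mathbf{y}$ to precision $\delta$, so that $|\tilde{\mathbf{y}}_i-\mathbf{y}_i|\le\delta$ for all $i$. Then $$\Pr\big(\mathbf{a}^\top\tilde{\mathbf{y}}=0\big)\le\frac{2\delta n^2}{\|\mathbf{a}\|_2R}.$$
   Context: $\mathbf{1}$ denotes the all-ones vector in $\mathbb{R}^n$. *)

theory Defs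
  imports "HOL-Analysis.Analysis"
begin

text \<open>Uniform (normalized surface) probability measure on the sphere of radius R
  in real^'n, defined as the cone measure: push forward the uniform distribution
  on the unit ball along x \<mapsto> R x / |x|.\<close>
definition unif_sphere :: "real \<Rightarrow> (real^'n::finite) measure" where
  "unif_sphere R = distr (uniform_measure lborel (ball 0 1)) borel (\<lambda>x. R *\<^sub>R (x /\<^sub>R norm x))"

definition round_vec :: "(real \<Rightarrow> real) \<Rightarrow> real^'n::finite \<Rightarrow> real^'n" where
  "round_vec r y = (\<chi> i. r (y $ i))"

end

theory Submission
  imports Defs
begin

text \<open>
  Rounding moves \<open>a \<bullet> y\<close> by at most \<open>2 n \<delta>\<close>, so \<open>a \<bullet> round_vec r y = 0\<close> forces
  \<open>\<bar>a \<bullet> y\<bar> \<le> 2 n \<delta>\<close>. Since \<open>y = R x / \<bar>x\<bar>\<close> with \<open>x\<close> uniform in the unit ball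
  and \<open>\<bar>x\<bar> \<le> 1\<close>, the point \<open>x\<close> then lies in the slab \<open>\<bar>a \<bullet> x\<bar> \<le> 2 n \<delta> / R\<close>.
  A slab \<open>\<bar>e \<bullet> x\<bar> \<le> h\<close> (\<open>e\<close> a unit vector) meets the unit ball in volume at most
  \<open>h n\<close> times the volume of the ball: the linear map scaling the direction \<open>e\<close> by
  \<open>1 / (h \<surd>n)\<close> and its orthogonal complement by \<open>\<surd>(1 - 1/n)\<close> maps ball \<open>\<inter>\<close> slab into
  the ball, and by Bernoulli's inequality its determinant is at least \<open>1 / (h n)\<close>.
\<close>

text \<open>
  The change of variables formula \<open>measure_linear_image\<close> is stated for index types of class
  \<open>wellorder\<close>; \<open>'a wo\<close> is a well-ordered copy of a finite type, and \<open>relabel\<close> transports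
  Lebesgue measure between the two coordinate spaces.
\<close>

typedef 'a wo = "UNIV :: 'a set" by simp

instantiation wo :: (finite) wellorder
begin
definition less_eq_wo :: "'a wo \<Rightarrow> 'a wo \<Rightarrow> bool" where
  "less_eq_wo x y \<longleftrightarrow> to_nat (Rep_wo x) \<le> to_nat (Rep_wo y)"
definition less_wo :: "'a wo \<Rightarrow> 'a wo \<Rightarrow> bool" where
  "less_wo x y \<longleftrightarrow> to_nat (Rep_wo x) < to_nat (Rep_wo y)"
instance
proof
  fix x y z :: "'a wo"
  show "(x < y) = (x \<le> y \<and> \<not> y \<le> x)" by (auto simp: less_eq_wo_def less_wo_def)
  show "x \<le> x" by (simp add: less_eq_wo_def)
  show "x \<le> y \<Longrightarrow> y \<le> z \<Longrightarrow> x \<le> z" by (simp add: less_eq_wo_def)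
  show "x \<le> y \<Longrightarrow> y \<le> x \<Longrightarrow> x = y"
    by (simp add: less_eq_wo_def Rep_wo_inject[symmetric])
  show "x \<le> y \<or> y \<le> x" by (auto simp: less_eq_wo_def)
next
  fix P :: "'a wo \<Rightarrow> bool" and a
  assume H: "\<And>x. (\<And>y. y < x \<Longrightarrow> P y) \<Longrightarrow> P x"
  show "P a"
    by (induction a rule: measure_induct_rule[of "\<lambda>x. to_nat (Rep_wo x)"]) (rule H, simp add: less_wo_def)
qed
end

lemma bij_Rep_wo: "bij Rep_wo"
  by (rule bij_betwI[where g=Abs_wo]) (auto simp: Abs_wo_inverse Rep_wo_inverse)

instance wo :: (finite) finite
  by standard (simp add: bij_betw_finite[OF bij_Rep_wo])

lemma card_wo: "CARD('n::finite wo) = CARD('n)"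
  using bij_Rep_wo bij_betw_same_card by blast

lemma prod_Basis_cart: "(\<Prod>b\<in>Basis. (x::real^'n) \<bullet> b) = (\<Prod>i\<in>UNIV. x $ i)"
  by (simp add: Basis_vec_def cart_eq_inner_axis axis_eq_axis prod.UNION_disjoint)

definition relabel :: "real^('n::finite wo) \<Rightarrow> real^'n" where
  "relabel y = (\<chi> i. y $ Abs_wo i)"

definition unrelabel :: "real^'n::finite \<Rightarrow> real^('n wo)" where
  "unrelabel x = (\<chi> j. x $ Rep_wo j)"

lemma relabel_unrelabel [simp]: "relabel (unrelabel x) = x" "unrelabel (relabel y) = y"
  by (simp_all add: relabel_def unrelabel_def Abs_wo_inverse Rep_wo_inverse vec_eq_iff)

lemma inner_relabel: "x \<bullet> relabel y = unrelabel x \<bullet> y"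
  unfolding inner_vec_def relabel_def unrelabel_def
  using sum.reindex_bij_betw[OF bij_Rep_wo, of "\<lambda>i. x $ i * y $ Abs_wo i"]
  by (simp add: Rep_wo_inverse)

lemma norm_relabel [simp]: "norm (relabel y) = norm y"
  using inner_relabel[of "relabel y" y] by (simp add: norm_eq_sqrt_inner)

lemma relabel_borel [measurable]: "relabel \<in> borel_measurable borel"
  unfolding relabel_def by (intro borel_measurable_continuous_onI continuous_intros)

lemma distr_lborel_relabel: "distr lborel borel relabel = (lborel :: (real^'n::finite) measure)"
proof (rule lborel_eqI[symmetric])
  fix l u :: "real^'n"
  assume "\<And>b. b \<in> Basis \<Longrightarrow> l \<bullet> b \<le> u \<bullet> b"
  then have le: "l $ i \<le> u $ i" for i
    by (metis axis_in_Basis_iff cart_eq_inner_axis Basis_real_def insertI1)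
  have "relabel -` box l u = box (unrelabel l) (unrelabel u)"
    by (auto simp: mem_box_cart relabel_def unrelabel_def Abs_wo_inverse)
       (metis Abs_wo_inverse Rep_wo_inverse UNIV_I)+
  then have "emeasure (distr lborel borel relabel) (box l u)
      = emeasure lborel (box (unrelabel l) (unrelabel u))"
    by (simp add: emeasure_distr)
  also have "\<dots> = (\<Prod>b\<in>Basis. (unrelabel u - unrelabel l) \<bullet> b)"
    using le by (subst emeasure_lborel_box_eq) (auto simp: Basis_vec_def inner_axis unrelabel_def)
  also have "\<dots> = (\<Prod>j\<in>UNIV. u $ Rep_wo j - l $ Rep_wo j)"
    by (simp add: prod_Basis_cart unrelabel_def)
  also have "\<dots> = (\<Prod>b\<in>Basis. (u - l) \<bullet> b)"
    using prod.reindex_bij_betw[OF bij_Rep_wo, of "\<lambda>i. u $ i - l $ i"]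
    by (simp add: prod_Basis_cart)
  finally show "emeasure (distr lborel borel relabel) (box l u) = (\<Prod>b\<in>Basis. (u - l) \<bullet> b)" .
qed simp

lemma measure_relabel_preimage:
  assumes "S \<in> sets borel"
  shows "measure lborel (relabel -` S) = measure lborel (S :: (real^'n::finite) set)"
  using assms by (subst distr_lborel_relabel[symmetric]) (simp add: measure_distr)

definition stretch :: "'n \<Rightarrow> real \<Rightarrow> real \<Rightarrow> real^'n \<Rightarrow> real^'n" where
  "stretch k \<alpha> \<beta> x = (\<chi> j. (if j = k then \<alpha> else \<beta>) * x $ j)"

lemma linear_stretch: "linear (stretch k \<alpha> \<beta>)"
  unfolding linear_iff stretch_def by (auto simp: vec_eq_iff algebra_simps)

lemma det_stretch:
  "det (matrix (stretch k \<alpha> \<beta> :: real^'n::finite \<Rightarrow> _)) = \<alpha> * \<beta> ^ (CARD('n) - 1)"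
proof -
  have "det (matrix (stretch k \<alpha> \<beta> :: real^'n \<Rightarrow> _))
      = (\<Prod>j\<in>UNIV. if j = k then \<alpha> else \<beta>)"
    by (subst det_diagonal) (auto simp: matrix_def stretch_def axis_def)
  also have "\<dots> = \<alpha> * (\<Prod>j\<in>UNIV - {k}. \<beta>)"
    by (subst prod.remove[of UNIV k]) (auto intro!: prod.cong)
  finally show ?thesis by (simp add: card_Diff_singleton)
qed

lemma norm_power2_cart: "norm (x::real^'n::finite) ^ 2 = (\<Sum>j\<in>UNIV. (x $ j)^2)"
  by (simp only: power2_norm_eq_inner) (simp add: inner_vec_def power2_eq_square)

lemma norm_stretch_lt_1:
  assumes "norm y < 1" and "\<bar>y $ k\<bar> \<le> h" and "\<beta> \<noteq> 0" and "\<alpha>^2 * h^2 + \<beta>^2 \<le> 1"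
  shows "norm (stretch k \<alpha> \<beta> y) < 1"
proof -
  have rest: "(\<Sum>j\<in>UNIV - {k}. (y $ j)^2) = norm y ^ 2 - (y $ k)^2"
    by (simp add: norm_power2_cart sum.remove[of UNIV k])
  have "(\<Sum>j\<in>UNIV - {k}. ((if j = k then \<alpha> else \<beta>) * y $ j)^2)
      = (\<Sum>j\<in>UNIV - {k}. \<beta>^2 * (y $ j)^2)"
    by (rule sum.cong) (auto simp: power_mult_distrib)
  then have "norm (stretch k \<alpha> \<beta> y) ^ 2
      = \<alpha>^2 * (y $ k)^2 + (\<Sum>j\<in>UNIV - {k}. \<beta>^2 * (y $ j)^2)"
    unfolding norm_power2_cart stretch_def
    by (simp add: sum.remove[of UNIV k] power_mult_distrib)
  also have "\<dots> = \<alpha>^2 * (y $ k)^2 + \<beta>^2 * (norm y ^ 2 - (y $ k)^2)"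
    by (simp add: sum_distrib_left[symmetric] rest)
  also have "\<dots> \<le> \<alpha>^2 * h^2 + \<beta>^2 * norm y ^ 2"
  proof -
    have "h \<ge> 0"
      using assms(2) abs_ge_zero order_trans by blast
    then have "(y $ k)^2 \<le> h^2"
      using assms(2) power2_le_iff_abs_le by blast
    then show ?thesis
      by (intro add_mono mult_left_mono) auto
  qed
  also have "\<dots> < \<alpha>^2 * h^2 + \<beta>^2"
    using assms(1,3) by (simp add: power_less_one_iff)
  finally have "norm (stretch k \<alpha> \<beta> y) ^ 2 < 1"
    using assms(4) by linarith
  then show ?thesis
    by (simp add: abs_square_less_1)
qed

lemma sqrt_one_minus_inverse_power_ge:
  assumes "m > 0"
  shows "sqrt (1 - 1 / real m) ^ (m - 1) \<ge> 1 / sqrt (real m)"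
proof -
  have "1 / real m = 1 + real (m - 1) * (- 1 / real m)"
    using assms by (simp add: of_nat_diff field_simps)
  also have "\<dots> \<le> (1 - 1 / real m) ^ (m - 1)"
    using Bernoulli_inequality[of "- 1 / real m" "m - 1"] assms by simp
  finally have "sqrt (1 / real m) \<le> sqrt ((1 - 1 / real m) ^ (m - 1))"
    by (rule real_sqrt_le_mono)
  then show ?thesis
    by (simp add: real_sqrt_power real_sqrt_divide)
qed

lemma stretch_orthogonal_image_slab_subset_ball:
  assumes Q: "orthogonal_transformation Q" and Qe: "Q e = axis k (1::real)"
    and "\<beta> \<noteq> 0" and "\<alpha>^2 * h^2 + \<beta>^2 \<le> 1"
  shows "(stretch k \<alpha> \<beta> \<circ> Q) ` (ball 0 1 \<inter> {x. \<bar>e \<bullet> x\<bar> \<le> h}) \<subseteq> ball 0 1"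
proof clarsimp
  fix x assume "norm x < 1" "\<bar>e \<bullet> x\<bar> \<le> h"
  moreover have "Q x $ k = e \<bullet> x"
  proof -
    have "Q x $ k = Q x \<bullet> Q e"
      by (simp add: Qe inner_axis)
    also have "\<dots> = e \<bullet> x"
      using Q by (simp add: orthogonal_transformation_def inner_commute)
    finally show ?thesis .
  qed
  ultimately show "norm (stretch k \<alpha> \<beta> (Q x)) < 1"
    using Q assms(3,4) by (intro norm_stretch_lt_1) (auto simp: orthogonal_transformation_norm)
qed

lemma abs_det_stretch_orthogonal:
  assumes "orthogonal_transformation (Q :: real^'n::finite \<Rightarrow> real^'n)"
  shows "\<bar>det (matrix (stretch k \<alpha> \<beta> \<circ> Q))\<bar> = \<bar>\<alpha>\<bar> * \<bar>\<beta>\<bar> ^ (CARD('n) - 1)"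
proof -
  have "\<bar>det (matrix Q)\<bar> = 1"
    using assms det_orthogonal_matrix orthogonal_transformation_matrix by fastforce
  then show ?thesis
    using assms by (simp add: matrix_compose linear_stretch orthogonal_transformation_linear
        det_mul det_stretch abs_mult power_abs)
qed

lemma measure_ball_slab_le_wellorder:
  fixes e :: "real^'n::{finite,wellorder}"
  assumes e: "norm e = 1" and h: "h > 0" and card: "CARD('n) \<ge> 2"
  shows "measure lebesgue (ball 0 1 \<inter> {x. \<bar>e \<bullet> x\<bar> \<le> h})
           \<le> h * CARD('n) * measure lebesgue (ball (0::real^'n::{finite,wellorder}) 1)"
proof -
  define m where "m = card (UNIV :: 'n set)"
  define \<alpha> where "\<alpha> = 1 / (h * sqrt m)"
  define \<beta> where "\<beta> = sqrt (1 - 1 / m)"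
  define A where "A = ball (0::real^'n::{finite,wellorder}) 1 \<inter> {x. \<bar>e \<bullet> x\<bar> \<le> h}"
  have m: "real m \<ge> 2"
    using card by (simp add: m_def)
  obtain k :: 'n where True by simp
  obtain Q where Q: "orthogonal_transformation Q" and Qe: "Q e = axis k (1::real)"
    using orthogonal_transformation_exists_1[of e "axis k 1"] e by auto
  define L where "L = stretch k \<alpha> \<beta> \<circ> Q"
  have "linear L"
    unfolding L_def by (intro linear_compose[OF orthogonal_transformation_linear[OF Q] linear_stretch])
  have A: "A \<in> lmeasurable"
    by (rule fmeasurableI2[where A="ball 0 1"]) (auto simp: A_def)
  have "\<alpha>^2 * h^2 + \<beta>^2 = 1" and "\<beta> \<noteq> 0"
    using h m by (simp_all add: \<alpha>_def \<beta>_def power_divide power_mult_distrib)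
  then have "L ` A \<subseteq> ball 0 1"
    unfolding L_def A_def using Q Qe by (intro stretch_orthogonal_image_slab_subset_ball) auto
  then have "measure lebesgue (L ` A) \<le> measure lebesgue (ball (0::real^'n::{finite,wellorder}) 1)"
    using measurable_linear_image[OF \<open>linear L\<close> A] by (intro measure_mono_fmeasurable) auto
  moreover have "measure lebesgue (L ` A) = \<alpha> * \<beta> ^ (m - 1) * measure lebesgue A"
    using measure_linear_image[OF \<open>linear L\<close> A] abs_det_stretch_orthogonal[OF Q, of k \<alpha> \<beta>] h
    by (simp add: L_def m_def \<alpha>_def \<beta>_def)
  moreover have "\<alpha> * \<beta> ^ (m - 1) \<ge> 1 / (h * m)"
  proof -
    have "\<alpha> * \<beta> ^ (m - 1) \<ge> \<alpha> * (1 / sqrt m)"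
      using sqrt_one_minus_inverse_power_ge[of m] h m by (intro mult_left_mono) (auto simp: \<alpha>_def \<beta>_def)
    moreover have "\<alpha> * (1 / sqrt m) = 1 / (h * m)"
      using m by (simp add: \<alpha>_def)
    ultimately show ?thesis by simp
  qed
  then have "1 / (h * m) * measure lebesgue A \<le> \<alpha> * \<beta> ^ (m - 1) * measure lebesgue A"
    by (rule mult_right_mono) simp
  ultimately have "1 / (h * m) * measure lebesgue A \<le> measure lebesgue (ball (0::real^'n::{finite,wellorder}) 1)"
    by linarith
  then show ?thesis
    using h m by (simp add: A_def m_def field_simps)
qed

lemma measure_ball_slab_le:
  fixes a :: "real^'n::finite"
  assumes a: "a \<noteq> 0" and s: "s > 0" and card: "CARD('n) \<ge> 2"
  shows "measure lborel (ball 0 1 \<inter> {x. \<bar>a \<bullet> x\<bar> \<le> s})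
           \<le> s / norm a * CARD('n) * measure lborel (ball (0::real^'n) 1)"
proof -
  define e :: "real^'n wo" where "e = unrelabel a /\<^sub>R norm a"
  define h where "h = s / norm a"
  have "norm (unrelabel a) = norm a"
    using norm_relabel[of "unrelabel a"] by simp
  then have e: "norm e = 1"
    using a by (simp add: e_def)
  have h: "h > 0"
    using a s by (simp add: h_def)
  have preimage: "relabel -` (ball 0 1 \<inter> {x. \<bar>a \<bullet> x\<bar> \<le> s}) = ball 0 1 \<inter> {y. \<bar>e \<bullet> y\<bar> \<le> h}"
  proof -
    have "e \<bullet> y = (a \<bullet> relabel y) / norm a" for y
      by (simp add: e_def inner_relabel divide_inverse mult.commute)
    then show ?thesis
      using a by (auto simp: h_def abs_divide divide_le_cancel)
  qed
  have "measure lborel (ball 0 1 \<inter> {x. \<bar>a \<bullet> x\<bar> \<le> s})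
      = measure lborel (ball 0 1 \<inter> {y. \<bar>e \<bullet> y\<bar> \<le> h})"
    unfolding preimage[symmetric] by (rule measure_relabel_preimage[symmetric]) measurable
  also have "\<dots> = measure lebesgue (ball 0 1 \<inter> {y. \<bar>e \<bullet> y\<bar> \<le> h})"
    by (rule measure_completion[symmetric]) measurable
  also have "\<dots> \<le> h * CARD('n wo) * measure lebesgue (ball (0::real^'n wo) 1)"
    using measure_ball_slab_le_wellorder[OF e h] card by (simp add: card_wo)
  also have "measure lebesgue (ball (0::real^'n wo) 1) = measure lborel (ball (0::real^'n) 1)"
  proof -
    have "relabel -` ball 0 1 = (ball 0 1 :: (real^'n wo) set)"
      by auto
    with measure_relabel_preimage[of "ball (0::real^'n) 1"] show ?thesis
      by simp
  qed
  finally show ?thesis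
    by (simp add: h_def card_wo)
qed

lemma measure_unif_sphere:
  fixes E :: "(real^'n::finite) set"
  assumes "E \<in> sets borel"
  shows "measure (unif_sphere R) E
    = measure lborel (ball 0 1 \<inter> (\<lambda>x. R *\<^sub>R (x /\<^sub>R norm x)) -` E) / measure lborel (ball (0::real^'n) 1)"
proof -
  let ?f = "\<lambda>x::real^'n. R *\<^sub>R (x /\<^sub>R norm x)"
  have f: "?f \<in> borel_measurable borel"
    by measurable
  have "?f -` E \<in> sets borel"
    by (rule measurable_sets_borel[OF f assms])
  have "measure (unif_sphere R) E = measure (uniform_measure lborel (ball 0 1)) (?f -` E)"
    using assms f by (simp add: unif_sphere_def measure_distr)
  also have "\<dots> = measure lborel (ball 0 1 \<inter> ?f -` E) / measure lborel (ball (0::real^'n) 1)"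
    using \<open>?f -` E \<in> sets borel\<close> content_ball_pos[of 1 "0::real^'n"] emeasure_lborel_ball_finite[of "0::real^'n" 1]
    by (intro measure_uniform_measure) (auto simp: emeasure_eq_ennreal_measure)
  finally show ?thesis .
qed

lemma measure_unif_sphere_le_slab:
  fixes E :: "(real^'n::finite) set"
  assumes "E \<in> sets borel" and "\<And>x. x \<in> ball 0 1 \<Longrightarrow> R *\<^sub>R (x /\<^sub>R norm x) \<in> E \<Longrightarrow> \<bar>a \<bullet> x\<bar> \<le> s"
  shows "measure (unif_sphere R) E
    \<le> measure lborel (ball 0 1 \<inter> {x. \<bar>a \<bullet> x\<bar> \<le> s}) / measure lborel (ball (0::real^'n) 1)"
proof -
  have "(\<lambda>x::real^'n. R *\<^sub>R (x /\<^sub>R norm x)) -` E \<in> sets borel"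
    by (rule measurable_sets_borel[OF _ assms(1)]) measurable
  moreover have "ball (0::real^'n) 1 \<in> fmeasurable lborel"
    using emeasure_lborel_ball_finite[of "0::real^'n" 1] unfolding fmeasurable_def by simp
  moreover have "ball 0 1 \<inter> {x. \<bar>a \<bullet> x\<bar> \<le> s} \<in> sets lborel"
    by measurable
  ultimately show ?thesis
    unfolding measure_unif_sphere[OF assms(1)] using assms(2)
    by (intro divide_right_mono measure_mono_fmeasurable) (auto intro: fmeasurableI2)
qed

lemma borel_measurable_inner_round_vec:
  assumes "r \<in> borel_measurable borel"
  shows "(\<lambda>y. a \<bullet> round_vec r y) \<in> borel_measurable borel"
proof -
  have "(\<lambda>y. y $ i) \<in> borel_measurable borel" for i
    by (intro borel_measurable_continuous_onI continuous_intros)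
  then show ?thesis
    using assms unfolding round_vec_def inner_vec_def by simp
qed

lemma abs_inner_le_of_inner_round_vec_eq_0:
  fixes a y :: "real^'n::finite"
  assumes "a \<bullet> round_vec r y = 0" and "\<forall>i. \<bar>a $ i\<bar> \<le> c" and "\<forall>t. \<bar>r t - t\<bar> \<le> \<delta>"
  shows "\<bar>a \<bullet> y\<bar> \<le> c * \<delta> * CARD('n)"
proof -
  have c: "c \<ge> 0"
    using assms(2) abs_ge_zero order_trans by blast
  have "a \<bullet> y = a \<bullet> y - a \<bullet> round_vec r y"
    using assms(1) by simp
  also have "\<dots> = (\<Sum>i\<in>UNIV. a $ i * (y $ i - r (y $ i)))"
    by (simp add: inner_vec_def round_vec_def right_diff_distrib sum_subtractf)
  finally have "\<bar>a \<bullet> y\<bar> \<le> (\<Sum>i\<in>UNIV. \<bar>a $ i\<bar> * \<bar>y $ i - r (y $ i)\<bar>)"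
    by (simp add: order_trans[OF sum_abs] abs_mult)
  also have "\<dots> \<le> (\<Sum>i\<in>(UNIV::'n set). c * \<delta>)"
  proof (rule sum_mono)
    fix i
    have "\<bar>y $ i - r (y $ i)\<bar> \<le> \<delta>"
      using assms(3) by (simp add: abs_minus_commute)
    then show "\<bar>a $ i\<bar> * \<bar>y $ i - r (y $ i)\<bar> \<le> c * \<delta>"
      using assms(2) c by (simp add: mult_mono)
  qed
  finally show ?thesis
    by (simp add: algebra_simps)
qed

lemma abs_inner_le_radial_projection:
  fixes a x :: "'a::real_inner"
  assumes "norm x \<le> 1" and "R > 0"
  shows "\<bar>a \<bullet> x\<bar> \<le> \<bar>a \<bullet> (R *\<^sub>R (x /\<^sub>R norm x))\<bar> / R"
proof (cases "x = 0")
  case False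
  then have "\<bar>a \<bullet> x\<bar> \<le> \<bar>a \<bullet> x\<bar> / norm x"
    using assms(1) by (simp add: le_divide_eq mult_left_le)
  also have "\<dots> = \<bar>a \<bullet> (R *\<^sub>R (x /\<^sub>R norm x))\<bar> / R"
    using assms(2) by (simp add: abs_mult divide_inverse mult.commute)
  finally show ?thesis .
qed simp

theorem lemma8p1:
  fixes a :: "real^'n::finite" and \<delta> R :: real and r :: "real \<Rightarrow> real"
  assumes "CARD('n) \<ge> 2" and "\<delta> > 0" and "R > 0"
    and "a \<noteq> 0" and "\<forall>i. -2 \<le> a $ i \<and> a $ i \<le> 2"
    and "a \<bullet> (\<chi> i. 1) = 0"
    and "r \<in> borel_measurable borel" and "\<forall>t. \<bar>r t - t\<bar> \<le> \<delta>"
  shows "measure (unif_sphere R) {y. a \<bullet> round_vec r y = 0}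
           \<le> 2 * \<delta> * (real CARD('n))^2 / (norm a * R)"
proof -
  define s where "s = 2 * \<delta> * CARD('n) / R"
  define V where "V = measure lborel (ball (0::real^'n) 1)"
  have a: "\<forall>i. \<bar>a $ i\<bar> \<le> 2"
    using assms(5) by (auto simp: abs_le_iff minus_le_iff)
  have "\<bar>a \<bullet> x\<bar> \<le> s" if "x \<in> ball 0 1" and "a \<bullet> round_vec r (R *\<^sub>R (x /\<^sub>R norm x)) = 0" for x
  proof -
    have "\<bar>a \<bullet> (R *\<^sub>R (x /\<^sub>R norm x))\<bar> \<le> 2 * \<delta> * CARD('n)"
      using that(2) a assms(8) by (rule abs_inner_le_of_inner_round_vec_eq_0)
    moreover have "\<bar>a \<bullet> x\<bar> \<le> \<bar>a \<bullet> (R *\<^sub>R (x /\<^sub>R norm x))\<bar> / R"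
      using that(1) assms(3) by (intro abs_inner_le_radial_projection) auto
    ultimately show ?thesis
      unfolding s_def using assms(3) by (meson divide_right_mono less_imp_le order_trans)
  qed
  moreover have "{y. a \<bullet> round_vec r y = 0} \<in> sets borel"
    using borel_measurable_inner_round_vec[OF assms(7)] by measurable
  ultimately have "measure (unif_sphere R) {y. a \<bullet> round_vec r y = 0}
      \<le> measure lborel (ball 0 1 \<inter> {x. \<bar>a \<bullet> x\<bar> \<le> s}) / V"
    unfolding V_def by (intro measure_unif_sphere_le_slab) auto
  also have "\<dots> \<le> s / norm a * CARD('n) * V / V"
    unfolding V_def using assms(1-4) by (intro divide_right_mono measure_ball_slab_le) (auto simp: s_def)
  also have "\<dots> = 2 * \<delta> * (real CARD('n))^2 / (norm a * R)"
    using content_ball_pos[of 1 "0::real^'n"] by (simp add: V_def s_def power2_eq_square mult_ac)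
  finally show ?thesis .
qed

end
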